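(* Let $V,W$ be sets of size $n$ and $\mathbf M$ a uniformly random perfect matching between $V$ and $W$. Let $A_0,\dots,A_s$ and $B_0,\dots,B_t$ be partitions of $V$ and $W$ into nonempty parts, $a_i=|A_i|$, $b_j=|B_j|$, where $s,t$ are fixed. Let $(e_{ij})_{0\le i\le s,0\le j\le t}$ be nonnegative integers with $\sum_je_{ij}=a_i$ for every $i$ and $\sum_ie_{ij}=b_j$ for every $j$. Write $\mu_{ij}=a_ib_j/n$, $e_{ij}=\mu_{ij}(1+\epsilon_{ij})$, $E_{ij}$ for the number of edges of $\mathbf M$ between $A_i$ and $B_j$, and \[\chi=n^{-1/2}\Big(\frac{\prod_ia_i\prod_jb_j}{\prod_{ij:e_{ij}\ne0}e_{ij}}\Big)^{1/2}.\] Then \[\mathbb{P}\Big(\bigcap_{i,j}\{E_{ij}=e_{ij}\}\Big)\asymp\chi\cdot\exp\Big(-\sum_{i,j}\mu_{ij}\big[(1+\epsilon_{ij})\log(1+\epsilon_{ij})-\epsilon_{ij}\big]\Big),\] with the convention that the bracket equals $1$ when $\epsilon_{ij}=-1$, and where the implied constants depend only on $s,t$.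
   Context: $f\asymp g$ means $f\le Cg$ and $g\le Cf$ for a constant $C$ independent of $n$. Logarithms are natural. *)

theory Defs
  imports "HOL-Analysis.Analysis" "HOL-Library.FuncSet"
begin

definition is_partition :: "'a set \<Rightarrow> nat \<Rightarrow> (nat \<Rightarrow> 'a set) \<Rightarrow> bool" where
  "is_partition V s A \<longleftrightarrow>
     (\<forall>i\<le>s. A i \<noteq> {}) \<and>
     (\<forall>i\<le>s. \<forall>j\<le>s. i \<noteq> j \<longrightarrow> A i \<inter> A j = {}) \<and>
     (\<Union>i\<le>s. A i) = V"

text \<open>Perfect matchings between V and W, encoded as bijections V to W
  (extensional outside V so that they are counted correctly).\<close>
definition perfect_matchings :: "'a set \<Rightarrow> 'b set \<Rightarrow> ('a \<Rightarrow> 'b) set" where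
  "perfect_matchings V W = {f \<in> V \<rightarrow>\<^sub>E W. bij_betw f V W}"

definition edges_between :: "('a \<Rightarrow> 'b) \<Rightarrow> 'a set \<Rightarrow> 'b set \<Rightarrow> nat" where
  "edges_between f A B = card {v \<in> A. f v \<in> B}"

definition matching_prob ::
  "'a set \<Rightarrow> 'b set \<Rightarrow> nat \<Rightarrow> nat \<Rightarrow> (nat \<Rightarrow> 'a set) \<Rightarrow> (nat \<Rightarrow> 'b set) \<Rightarrow> (nat \<Rightarrow> nat \<Rightarrow> nat) \<Rightarrow> real" where
  "matching_prob V W s t A B e =
     real (card {f \<in> perfect_matchings V W. \<forall>i\<le>s. \<forall>j\<le>t. edges_between f (A i) (B j) = e i j})
     / real (card (perfect_matchings V W))"

definition bracket :: "real \<Rightarrow> real" where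
  "bracket x = (if x = -1 then 1 else (1 + x) * ln (1 + x) - x)"

end

theory Submission
  imports Defs
begin

text \<open>
  The proof has two independent halves.  The first is exact combinatorics: the number of
  perfect matchings between V and W with E_ij = e_ij for all i, j is
  (\<Prod>i. a_i!) (\<Prod>j. b_j!) / (\<Prod>i j. e_ij!), proved by induction on |V| by fixing the
  partner of one vertex; dividing by n! gives the probability exactly.  The second is
  analysis: with the elementary Stirling bounds  s(m) \<le> m! \<le> e s(m),
  s(m) = sqrt(max m 1) (m/e)^m,  replacing every factorial by s changes this ratio by at most
  a factor e^((s+2)(t+2)), and the Stirling ratio is, by a direct computation using the
  margin constraints, exactly chi exp(-\<Sum> \<mu>_ij [(1+\<epsilon>_ij) log(1+\<epsilon>_ij) - \<epsilon>_ij]).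
\<close>

subsection \<open>Stirling bounds for factorials\<close>

text \<open>Two elementary bounds for log(1 + x), x \<ge> 0, proved by monotonicity of the difference;
  they control the step of the Stirling defect from both sides.\<close>
lemma ln_one_plus_lower:
  fixes x :: real assumes "0 \<le> x" shows "2 * x / (2 + x) \<le> ln (1 + x)"
proof -
  let ?g = "\<lambda>x::real. ln (1 + x) - 2 * x / (2 + x)"
  have "?g 0 \<le> ?g x"
  proof (rule DERIV_nonneg_imp_nondecreasing[OF assms])
    fix y :: real assume y: "0 \<le> y" "y \<le> x"
    have "(?g has_real_derivative (1/(1+y) - (2*(2+y) - 2*y)/(2+y)^2)) (at y)"
      using y by (auto intro!: derivative_eq_intros simp: power2_eq_square)
    moreover have "1/(1+y) - (2*(2+y) - 2*y)/(2+y)^2 = y^2 / ((1+y) * (2+y)^2)"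
      using y by (simp add: divide_simps power2_eq_square) (simp add: algebra_simps)
    ultimately show "\<exists>d. (?g has_real_derivative d) (at y) \<and> d \<ge> 0"
      using y by auto
  qed
  thus ?thesis by simp
qed

lemma ln_one_plus_upper:
  fixes x :: real assumes "0 \<le> x" shows "ln (1 + x) \<le> x - x^2/2 + x^3/3"
proof -
  let ?g = "\<lambda>x::real. x - x^2/2 + x^3/3 - ln (1 + x)"
  have "?g 0 \<le> ?g x"
  proof (rule DERIV_nonneg_imp_nondecreasing[OF assms])
    fix y :: real assume y: "0 \<le> y" "y \<le> x"
    have "(?g has_real_derivative (1 - y + y^2 - 1/(1+y))) (at y)"
      using y by (auto intro!: derivative_eq_intros simp: power2_eq_square)
    moreover have "1 - y + y^2 - 1/(1+y) = y^3 / (1+y)"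
      using y by (simp add: field_simps power2_eq_square power3_eq_cube)
    ultimately show "\<exists>d. (?g has_real_derivative d) (at y) \<and> d \<ge> 0"
      using y by auto
  qed
  thus ?thesis by simp
qed

text \<open>The Stirling defect log m! - (m + 1/2) log m + m.  It decreases in m, while the defect
  minus 1/(2m) increases; hence it stays between 0 and its value 1 at m = 1.\<close>
definition stirling_defect :: "nat \<Rightarrow> real" where
  "stirling_defect m = ln (fact m) - (real m + 1/2) * ln (real m) + real m"

lemma stirling_defect_step:
  assumes "m \<ge> 1"
  shows "stirling_defect (Suc m) - stirling_defect m = 1 - (real m + 1/2) * ln (1 + 1 / real m)"
proof -
  have fact_Suc: "ln (fact (Suc m) :: real) = ln (real m + 1) + ln (fact m)"
    by (simp add: ln_mult add.commute)
  have ln_ratio: "ln (1 + 1 / real m) = ln (real m + 1) - ln (real m)"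
  proof -
    have "1 + 1 / real m = (real m + 1) / real m" using assms by (simp add: field_simps)
    thus ?thesis using assms by (simp add: ln_div)
  qed
  show ?thesis
    unfolding stirling_defect_def ln_ratio fact_Suc of_nat_Suc by (simp add: algebra_simps)
qed

text \<open>Its lower bound for log(1 + 1/m) makes each step nonpositive.\<close>
lemma stirling_defect_decreasing:
  assumes "m \<ge> 1" shows "stirling_defect (Suc m) \<le> stirling_defect m"
proof -
  have m: "real m \<ge> 1" using assms by simp
  have "2 * (1 / real m) / (2 + 1 / real m) \<le> ln (1 + 1 / real m)"
    by (rule ln_one_plus_lower) simp
  moreover have "2 * (1 / real m) / (2 + 1 / real m) = 1 / (real m + 1/2)"
    using m by (simp add: field_simps)
  ultimately have "1 \<le> (real m + 1/2) * ln (1 + 1 / real m)"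
    using m by (simp add: field_simps)
  thus ?thesis using stirling_defect_step[OF assms] by simp
qed

text \<open>The cubic upper bound for log(1 + 1/m) makes each step at least 1/(2(m+1)) - 1/(2m).\<close>
lemma stirling_defect_corrected_increasing:
  assumes "m \<ge> 1"
  shows "stirling_defect m - 1 / (2 * real m) \<le> stirling_defect (Suc m) - 1 / (2 * real (Suc m))"
proof -
  define x where "x = 1 / real m"
  have x: "0 < x" "x \<le> 1" using assms by (auto simp: x_def)
  have "(real m + 1/2) * ln (1 + x) \<le> (1/x + 1/2) * (x - x^2/2 + x^3/3)"
    using x ln_one_plus_upper[of x] by (intro mult_mono) (auto simp: x_def)
  also have "\<dots> = 1 + x^2 * ((1 + 2*x) / 12)"
    using x by (simp add: field_simps power2_eq_square power3_eq_cube)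
  also have "\<dots> \<le> 1 + x^2 / (2 * (1 + x))"
  proof -
    have "(1 + 2*x) * (2 * (1 + x)) \<le> 12"
      using x mult_mono[of x 1 x 1] by (simp add: algebra_simps)
    hence "(1 + 2*x) / 12 \<le> 1 / (2 * (1 + x))"
      using x by (simp add: field_simps)
    hence "x^2 * ((1 + 2*x) / 12) \<le> x^2 * (1 / (2 * (1 + x)))"
      by (rule mult_left_mono) simp
    thus ?thesis by simp
  qed
  finally have "(real m + 1/2) * ln (1 + 1 / real m) \<le> 1 + x^2 / (2 * (1 + x))"
    by (simp add: x_def)
  moreover have "x^2 / (2 * (1 + x)) = 1 / (2 * real m) - 1 / (2 * real (Suc m))"
    using assms by (simp add: x_def field_simps power2_eq_square)
  ultimately show ?thesis using stirling_defect_step[OF assms] by simp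
qed

lemma stirling_defect_bounds:
  assumes "m \<ge> 1" shows "0 \<le> stirling_defect m" "stirling_defect m \<le> 1"
proof -
  have one: "stirling_defect 1 = 1" by (simp add: stirling_defect_def)
  have "stirling_defect m \<le> stirling_defect 1"
    using assms by (induction m rule: dec_induct) (use stirling_defect_decreasing in force)+
  thus "stirling_defect m \<le> 1" using one by simp
  have "stirling_defect 1 - 1 / (2 * real 1) \<le> stirling_defect m - 1 / (2 * real m)"
    using assms
    by (induction m rule: dec_induct) (use stirling_defect_corrected_increasing in force)+
  moreover have "1 / (2 * real m) \<ge> 0" by simp
  ultimately show "0 \<le> stirling_defect m" using one by linarith
qed

text \<open>The Stirling approximation s(m) = sqrt(max m 1) (m/e)^m; the maximum makes s(0) = 1 = 0!.\<close>
definition xlnx :: "nat \<Rightarrow> real" where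
  "xlnx m = real m * ln (real m)"

definition stirling :: "nat \<Rightarrow> real" where
  "stirling m = sqrt (real (max m 1)) * exp (xlnx m - real m)"

lemma stirling_pos: "stirling m > 0"
  by (simp add: stirling_def)

lemma fact_eq_stirling_defect:
  assumes "m \<ge> 1" shows "fact m = exp (stirling_defect m) * stirling m"
proof -
  have "stirling m = exp (ln (real m) / 2 + real m * ln (real m) - real m)"
    using assms by (simp add: stirling_def xlnx_def exp_add exp_diff ln_sqrt[symmetric] max_def)
  moreover have "exp (ln (fact m)) = (fact m :: real)" by simp
  ultimately show ?thesis
    unfolding stirling_defect_def by (simp add: exp_add[symmetric] algebra_simps)
qed

lemma fact_stirling_bounds: "stirling m \<le> fact m" "fact m \<le> exp 1 * stirling m"
proof (atomize (full), cases "m = 0")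
  case False
  hence "m \<ge> 1" by simp
  thus "stirling m \<le> fact m \<and> fact m \<le> exp 1 * stirling m"
    using fact_eq_stirling_defect stirling_defect_bounds stirling_pos[of m]
    by (auto intro: mult_right_mono)
qed (simp add: stirling_def xlnx_def)

subsection \<open>Factorial ratios versus Stirling ratios\<close>

lemma prod_fact_stirling:
  fixes f :: "'i \<Rightarrow> nat"
  shows "(\<Prod>i\<in>I. stirling (f i)) \<le> (\<Prod>i\<in>I. fact (f i))"
    and "(\<Prod>i\<in>I. fact (f i)) \<le> exp 1 ^ card I * (\<Prod>i\<in>I. stirling (f i))"
proof -
  show "(\<Prod>i\<in>I. stirling (f i)) \<le> (\<Prod>i\<in>I. fact (f i))"
    by (intro prod_mono) (auto simp: fact_stirling_bounds less_imp_le[OF stirling_pos])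
  have "(\<Prod>i\<in>I. fact (f i)) \<le> (\<Prod>i\<in>I. exp 1 * stirling (f i))"
    by (intro prod_mono) (auto simp: fact_stirling_bounds)
  also have "\<dots> = exp 1 ^ card I * (\<Prod>i\<in>I. stirling (f i))"
    by (simp add: prod.distrib)
  finally show "(\<Prod>i\<in>I. fact (f i)) \<le> exp 1 ^ card I * (\<Prod>i\<in>I. stirling (f i))" .
qed

lemma ratio_comparable:
  fixes x y N D cN cD :: real
  assumes "0 < x" "0 < y" "x \<le> N" "N \<le> cN * x" "y \<le> D" "D \<le> cD * y"
  shows "N / D \<le> cN * (x / y)" "x / y \<le> cD * (N / D)"
proof -
  have "N / D \<le> (cN * x) / y" using assms by (intro frac_le) auto
  thus "N / D \<le> cN * (x / y)" by simp
  have "cD > 0"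
  proof (rule ccontr)
    assume "\<not> cD > 0"
    hence "cD * y \<le> 0" using assms(2) by (simp add: mult_nonpos_nonneg)
    thus False using assms by linarith
  qed
  hence "x / y \<le> N / (D / cD)" using assms by (intro frac_le) (auto simp: field_simps)
  thus "x / y \<le> cD * (N / D)" by (simp add: mult.commute)
qed

lemma prod_fact_stirling_pair:
  fixes f :: "'i \<Rightarrow> nat" and g :: "'k \<Rightarrow> nat" and I :: "'i set" and K :: "'k set"
  defines "x \<equiv> (\<Prod>i\<in>I. stirling (f i)) * (\<Prod>k\<in>K. stirling (g k))"
  shows "x \<le> (\<Prod>i\<in>I. fact (f i)) * (\<Prod>k\<in>K. fact (g k))"
    and "(\<Prod>i\<in>I. fact (f i)) * (\<Prod>k\<in>K. fact (g k)) \<le> exp 1 ^ (card I + card K) * x"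
proof -
  have nonneg: "0 \<le> (\<Prod>i\<in>J. stirling (h i))" for J and h :: "'j \<Rightarrow> nat"
    by (intro prod_nonneg) (simp add: less_imp_le[OF stirling_pos])
  show "x \<le> (\<Prod>i\<in>I. fact (f i)) * (\<Prod>k\<in>K. fact (g k))"
    unfolding x_def by (intro mult_mono prod_fact_stirling nonneg) (simp_all add: prod_nonneg)
  have "(\<Prod>i\<in>I. fact (f i)) * (\<Prod>k\<in>K. fact (g k)) \<le>
          (exp 1 ^ card I * (\<Prod>i\<in>I. stirling (f i))) * (exp 1 ^ card K * (\<Prod>k\<in>K. stirling (g k)))"
    by (intro mult_mono prod_fact_stirling mult_nonneg_nonneg nonneg) (simp_all add: prod_nonneg)
  thus "(\<Prod>i\<in>I. fact (f i)) * (\<Prod>k\<in>K. fact (g k)) \<le> exp 1 ^ (card I + card K) * x"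
    by (simp add: x_def power_add ac_simps)
qed

lemma factorial_ratio_comparable:
  fixes s t n :: nat and a b :: "nat \<Rightarrow> nat" and e :: "nat \<Rightarrow> nat \<Rightarrow> nat"
  defines "F \<equiv> (\<Prod>i\<le>s. fact (a i)) * (\<Prod>j\<le>t. fact (b j)) /
               (fact n * (\<Prod>i\<le>s. \<Prod>j\<le>t. fact (e i j)))"
    and "S \<equiv> (\<Prod>i\<le>s. stirling (a i)) * (\<Prod>j\<le>t. stirling (b j)) /
               (stirling n * (\<Prod>i\<le>s. \<Prod>j\<le>t. stirling (e i j)))"
  shows "F \<le> exp 1 ^ ((s + 2) * (t + 2)) * S \<and> S \<le> exp 1 ^ ((s + 2) * (t + 2)) * F"
proof -
  let ?pairs = "{..s} \<times> {..t}" and ?e = "\<lambda>p. e (fst p) (snd p)"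
  have denominator: "g n * (\<Prod>i\<le>s. \<Prod>j\<le>t. g (e i j)) = (\<Prod>p\<in>?pairs. g (?e p)) * (\<Prod>k\<in>{n}. g k)"
    for g :: "nat \<Rightarrow> real"
    by (simp add: prod.cartesian_product case_prod_beta')
  note N = prod_fact_stirling_pair[of a "{..s}" b "{..t}"]
  note D = prod_fact_stirling_pair[of "?e" ?pairs "\<lambda>k. k" "{n}"]
  have "F \<le> exp 1 ^ (Suc s + Suc t) * S" "S \<le> exp 1 ^ Suc ((s + 1) * (t + 1)) * F"
    using ratio_comparable[OF _ _ N D] unfolding F_def S_def denominator
    by (simp_all add: prod_pos stirling_pos card_cartesian_product)
  moreover have "exp (1::real) ^ (Suc s + Suc t) \<le> exp 1 ^ ((s + 2) * (t + 2))"
    "exp (1::real) ^ Suc ((s + 1) * (t + 1)) \<le> exp 1 ^ ((s + 2) * (t + 2))"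
    by (rule power_increasing; simp add: algebra_simps)+
  moreover have "0 \<le> F" "0 \<le> S" unfolding F_def S_def
    by (simp_all add: prod_nonneg less_imp_le[OF stirling_pos])
  ultimately show ?thesis by (meson mult_right_mono order_trans)
qed

subsection \<open>Counting matchings with prescribed edge counts\<close>

definition matchings_with_counts ::
  "'a set \<Rightarrow> 'b set \<Rightarrow> nat \<Rightarrow> nat \<Rightarrow> (nat \<Rightarrow> 'a set) \<Rightarrow> (nat \<Rightarrow> 'b set) \<Rightarrow>
     (nat \<Rightarrow> nat \<Rightarrow> nat) \<Rightarrow> ('a \<Rightarrow> 'b) set" where
  "matchings_with_counts V W s t A B e =
     {f \<in> perfect_matchings V W. \<forall>i\<le>s. \<forall>j\<le>t. edges_between f (A i) (B j) = e i j}"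

definition admissible_counts ::
  "'a set \<Rightarrow> 'b set \<Rightarrow> nat \<Rightarrow> nat \<Rightarrow> (nat \<Rightarrow> 'a set) \<Rightarrow> (nat \<Rightarrow> 'b set) \<Rightarrow>
     (nat \<Rightarrow> nat \<Rightarrow> nat) \<Rightarrow> bool" where
  "admissible_counts V W s t A B e \<longleftrightarrow>
     finite V \<and> finite W \<and>
     disjoint_family_on A {..s} \<and> (\<Union>i\<le>s. A i) = V \<and>
     disjoint_family_on B {..t} \<and> (\<Union>j\<le>t. B j) = W \<and>
     (\<forall>i\<le>s. (\<Sum>j\<le>t. e i j) = card (A i)) \<and> (\<forall>j\<le>t. (\<Sum>i\<le>s. e i j) = card (B j))"

lemma admissible_counts_parts:
  assumes "admissible_counts V W s t A B e"
  shows "i \<le> s \<Longrightarrow> finite (A i)" and "j \<le> t \<Longrightarrow> finite (B j)"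
    and "i \<le> s \<Longrightarrow> i0 \<le> s \<Longrightarrow> v \<in> A i0 \<Longrightarrow> v \<in> A i \<longleftrightarrow> i = i0"
    and "j \<le> t \<Longrightarrow> j0 \<le> t \<Longrightarrow> w \<in> B j0 \<Longrightarrow> w \<in> B j \<longleftrightarrow> j = j0"
  using assms disjoint_family_onD[of A "{..s}" i i0] disjoint_family_onD[of B "{..t}" j j0]
  by (auto simp: admissible_counts_def intro: finite_subset)

definition decrement :: "(nat \<Rightarrow> nat \<Rightarrow> nat) \<Rightarrow> nat \<Rightarrow> nat \<Rightarrow> nat \<Rightarrow> nat \<Rightarrow> nat" where
  "decrement e i0 j0 i j = (if i = i0 \<and> j = j0 then e i j - 1 else e i j)"

lemma bij_betw_remove_pair:
  assumes "v \<in> V" "w \<in> W" "f v = w"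
  shows "bij_betw f V W \<longleftrightarrow> bij_betw f (V - {v}) (W - {w})"
proof
  assume "bij_betw f V W"
  thus "bij_betw f (V - {v}) (W - {w})"
    using bij_betw_DiffI[OF _ bij_betw_singletonI[of f v w]] assms by auto
next
  assume "bij_betw f (V - {v}) (W - {w})"
  moreover have "bij_betw f {v} {w}" using assms(3) by simp
  ultimately have "bij_betw f ((V - {v}) \<union> {v}) ((W - {w}) \<union> {w})"
    by (rule bij_betw_combine) simp
  thus "bij_betw f V W" using assms by (simp add: insert_absorb)
qed

lemma perfect_matchings_fiber:
  assumes v: "v \<in> V" and w: "w \<in> W"
  shows "{f \<in> perfect_matchings V W. f v = w} = (\<lambda>g. g(v := w)) ` perfect_matchings (V - {v}) (W - {w})"
    and "inj_on (\<lambda>g. g(v := w)) (perfect_matchings (V - {v}) (W - {w}))"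
proof -
  show "inj_on (\<lambda>g. g(v := w)) (perfect_matchings (V - {v}) (W - {w}))"
  proof (rule inj_onI)
    fix g1 g2 assume g: "g1 \<in> perfect_matchings (V - {v}) (W - {w})"
      "g2 \<in> perfect_matchings (V - {v}) (W - {w})" "g1(v := w) = g2(v := w)"
    hence "g1 v = g2 v" by (auto simp: perfect_matchings_def PiE_def extensional_def)
    thus "g1 = g2" using g(3) by (metis fun_upd_idem fun_upd_upd)
  qed
  show "{f \<in> perfect_matchings V W. f v = w} = (\<lambda>g. g(v := w)) ` perfect_matchings (V - {v}) (W - {w})"
  proof (intro equalityI subsetI)
    fix f assume "f \<in> {f \<in> perfect_matchings V W. f v = w}"
    hence fE: "f \<in> V \<rightarrow>\<^sub>E W" and fb: "bij_betw f V W" and fv: "f v = w"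
      by (auto simp: perfect_matchings_def)
    define g where "g = f(v := undefined)"
    have "g \<in> (V - {v}) \<rightarrow>\<^sub>E (W - {w})"
      using fE fb fv v by (auto simp: g_def PiE_iff bij_betw_def inj_on_def extensional_def)
    moreover have "bij_betw g (V - {v}) (W - {w})"
    proof -
      have "bij_betw f (V - {v}) (W - {w})" using fb bij_betw_remove_pair[of v V w W f, OF v w fv] by simp
      thus ?thesis by (rule bij_betw_cong[THEN iffD1, rotated]) (auto simp: g_def)
    qed
    moreover have "f = g(v := w)" using fv by (auto simp: g_def)
    ultimately show "f \<in> (\<lambda>g. g(v := w)) ` perfect_matchings (V - {v}) (W - {w})"
      by (auto simp: perfect_matchings_def)
  next
    fix f assume "f \<in> (\<lambda>g. g(v := w)) ` perfect_matchings (V - {v}) (W - {w})"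
    then obtain g where gE: "g \<in> (V - {v}) \<rightarrow>\<^sub>E (W - {w})" and gb: "bij_betw g (V - {v}) (W - {w})"
      and f: "f = g(v := w)" by (auto simp: perfect_matchings_def)
    have "f \<in> V \<rightarrow>\<^sub>E W" using gE v w by (auto simp: f PiE_iff extensional_def)
    moreover have "bij_betw f V W"
    proof -
      have "bij_betw f (V - {v}) (W - {w})"
        using gb by (rule bij_betw_cong[THEN iffD1, rotated]) (auto simp: f)
      thus ?thesis using bij_betw_remove_pair[of v V w W f, OF v w] by (simp add: f)
    qed
    ultimately show "f \<in> {f \<in> perfect_matchings V W. f v = w}" by (auto simp: perfect_matchings_def f)
  qed
qed

lemma edges_between_fun_upd:
  assumes "finite A" and "\<forall>x\<in>A - {v}. g x \<noteq> w"
  shows "edges_between (g(v := w)) A B =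
           edges_between g (A - {v}) (B - {w}) + (if v \<in> A \<and> w \<in> B then 1 else 0)"
proof -
  have "{x \<in> A. (g(v := w)) x \<in> B} =
          {x \<in> A - {v}. g x \<in> B - {w}} \<union> (if v \<in> A \<and> w \<in> B then {v} else {})"
    using assms(2) by auto
  thus ?thesis using assms(1) by (simp add: edges_between_def)
qed

lemma sum_decrement:
  fixes f :: "'i \<Rightarrow> nat"
  assumes "finite J" "j0 \<in> J" "f j0 > 0"
  shows "(\<Sum>j\<in>J. if j = j0 then f j - 1 else f j) = (\<Sum>j\<in>J. f j) - 1"
proof -
  have "(\<Sum>j\<in>J. if j = j0 then f j - 1 else f j) = (f j0 - 1) + (\<Sum>j\<in>J - {j0}. f j)"
    using assms(1,2) by (simp add: sum.remove)
  also have "\<dots> = (\<Sum>j\<in>J. f j) - 1" using assms by (simp add: sum.remove)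
  finally show ?thesis .
qed

lemma prod_update_factor:
  fixes h h' :: "'i \<Rightarrow> 'r::comm_monoid_mult"
  assumes "finite K" "k \<in> K" "\<And>x. x \<in> K \<Longrightarrow> x \<noteq> k \<Longrightarrow> h' x = h x" "h k = c * h' k"
  shows "prod h K = c * prod h' K"
proof -
  have "prod h (K - {k}) = prod h' (K - {k})" using assms(3) by (intro prod.cong) auto
  thus ?thesis using assms(1,2,4) by (simp add: prod.remove mult.assoc)
qed

lemma prod_fact_card_remove:
  assumes "finite I" "i0 \<in> I" "v \<in> A i0" "finite (A i0)"
    and "\<And>i. i \<in> I \<Longrightarrow> i \<noteq> i0 \<Longrightarrow> v \<notin> A i"
  shows "(\<Prod>i\<in>I. fact (card (A i))) = card (A i0) * (\<Prod>i\<in>I. fact (card (A i - {v})) :: nat)"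
proof (rule prod_update_factor[OF assms(1,2)])
  have "card (A i0) = Suc (card (A i0 - {v}))"
    using card_Suc_Diff1[OF assms(4,3)] by simp
  thus "fact (card (A i0)) = card (A i0) * fact (card (A i0 - {v}))" by simp
qed (use assms(5) in auto)

lemma prod_fact_decrement:
  assumes "i0 \<le> s" "j0 \<le> t" "e i0 j0 > 0"
  shows "(\<Prod>i\<le>s. \<Prod>j\<le>t. fact (e i j)) =
           e i0 j0 * (\<Prod>i\<le>s. \<Prod>j\<le>t. fact (decrement e i0 j0 i j) :: nat)"
proof (rule prod_update_factor[of _ i0])
  show "(\<Prod>j\<le>t. fact (e i0 j)) = e i0 j0 * (\<Prod>j\<le>t. fact (decrement e i0 j0 i0 j))"
  proof (rule prod_update_factor[of _ j0])
    show "fact (e i0 j0) = e i0 j0 * fact (decrement e i0 j0 i0 j0)"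
      using assms(3) by (simp add: decrement_def fact_reduce)
  qed (use assms(2) in \<open>auto simp: decrement_def\<close>)
qed (use assms(1) in \<open>auto simp: decrement_def\<close>)

lemma admissible_counts_remove:
  assumes adm: "admissible_counts V W s t A B e"
    and ij: "i0 \<le> s" "j0 \<le> t" and vw: "v \<in> A i0" "w \<in> B j0" and pos: "e i0 j0 > 0"
  shows "admissible_counts (V - {v}) (W - {w}) s t (\<lambda>i. A i - {v}) (\<lambda>j. B j - {w}) (decrement e i0 j0)"
proof -
  note adm' = adm[unfolded admissible_counts_def]
  note finA = admissible_counts_parts(1)[OF adm] and finB = admissible_counts_parts(2)[OF adm]
  have vA: "v \<in> A i \<longleftrightarrow> i = i0" if "i \<le> s" for i
    using admissible_counts_parts(3)[OF adm that ij(1) vw(1)] .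
  have wB: "w \<in> B j \<longleftrightarrow> j = j0" if "j \<le> t" for j
    using admissible_counts_parts(4)[OF adm that ij(2) vw(2)] .
  have rows: "(\<Sum>j\<le>t. decrement e i0 j0 i j) = card (A i - {v})" if i: "i \<le> s" for i
  proof (cases "i = i0")
    case True
    thus ?thesis using sum_decrement[of "{..t}" j0 "e i0"] adm' ij vw pos finA[OF i]
      by (simp add: decrement_def)
  qed (use adm' vA[OF i] i in \<open>simp add: decrement_def\<close>)
  have cols: "(\<Sum>i\<le>s. decrement e i0 j0 i j) = card (B j - {w})" if j: "j \<le> t" for j
  proof (cases "j = j0")
    case True
    thus ?thesis using sum_decrement[of "{..s}" i0 "\<lambda>i. e i j0"] adm' ij vw pos finB[OF j]
      by (simp add: decrement_def conj_commute)
  qed (use adm' wB[OF j] j in \<open>simp add: decrement_def\<close>)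
  have "disjoint_family_on (\<lambda>i. A i - {v}) {..s}" "disjoint_family_on (\<lambda>j. B j - {w}) {..t}"
    using adm' unfolding disjoint_family_on_def by blast+
  moreover have "(\<Union>i\<le>s. A i - {v}) = V - {v}" "(\<Union>j\<le>t. B j - {w}) = W - {w}"
    using adm' by auto
  ultimately show ?thesis using adm' rows cols by (simp add: admissible_counts_def)
qed

lemma edge_counts_fun_upd:
  assumes adm: "admissible_counts V W s t A B e"
    and ij: "i0 \<le> s" "j0 \<le> t" and vw: "v \<in> A i0" "w \<in> B j0" and pos: "e i0 j0 > 0"
    and g: "g \<in> perfect_matchings (V - {v}) (W - {w})"
  shows "(\<forall>i\<le>s. \<forall>j\<le>t. edges_between (g(v := w)) (A i) (B j) = e i j) \<longleftrightarrow>
           (\<forall>i\<le>s. \<forall>j\<le>t. edges_between g (A i - {v}) (B j - {w}) = decrement e i0 j0 i j)"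
proof -
  have "edges_between (g(v := w)) (A i) (B j) =
          edges_between g (A i - {v}) (B j - {w}) + (if i = i0 \<and> j = j0 then 1 else 0)"
    if i: "i \<le> s" and j: "j \<le> t" for i j
  proof -
    have "finite (A i)" using admissible_counts_parts(1)[OF adm i] .
    moreover have "\<forall>x\<in>A i - {v}. g x \<noteq> w"
      using g adm i by (auto simp: admissible_counts_def perfect_matchings_def PiE_iff)
    moreover have "v \<in> A i \<and> w \<in> B j \<longleftrightarrow> i = i0 \<and> j = j0"
      using admissible_counts_parts(3,4)[OF adm] i j ij vw by blast
    ultimately show ?thesis by (simp add: edges_between_fun_upd)
  qed
  hence "edges_between (g(v := w)) (A i) (B j) = e i j \<longleftrightarrow>
           edges_between g (A i - {v}) (B j - {w}) = decrement e i0 j0 i j" if "i \<le> s" "j \<le> t" for i j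
    using that pos by (auto simp: decrement_def)
  thus ?thesis by blast
qed

lemma matchings_with_counts_fiber:
  assumes adm: "admissible_counts V W s t A B e"
    and ij: "i0 \<le> s" "j0 \<le> t" and vw: "v \<in> A i0" "w \<in> B j0" and pos: "e i0 j0 > 0"
  shows "card {f \<in> matchings_with_counts V W s t A B e. f v = w} =
           card (matchings_with_counts (V - {v}) (W - {w}) s t (\<lambda>i. A i - {v}) (\<lambda>j. B j - {w})
                   (decrement e i0 j0))"
proof -
  have v: "v \<in> V" and w: "w \<in> W" using adm ij vw by (auto simp: admissible_counts_def)
  define M' where "M' = perfect_matchings (V - {v}) (W - {w})"
  let ?C = "\<lambda>f. \<forall>i\<le>s. \<forall>j\<le>t. edges_between f (A i) (B j) = e i j"
  have "{f \<in> matchings_with_counts V W s t A B e. f v = w} =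
          {f \<in> {f \<in> perfect_matchings V W. f v = w}. ?C f}"
    by (auto simp: matchings_with_counts_def)
  also have "\<dots> = {f \<in> (\<lambda>g. g(v := w)) ` M'. ?C f}"
    unfolding perfect_matchings_fiber(1)[OF v w] M'_def ..
  also have "\<dots> = (\<lambda>g. g(v := w)) ` {g \<in> M'. ?C (g(v := w))}"
    by blast
  also have "{g \<in> M'. ?C (g(v := w))} = matchings_with_counts (V - {v}) (W - {w}) s t
                 (\<lambda>i. A i - {v}) (\<lambda>j. B j - {w}) (decrement e i0 j0)"
    using edge_counts_fun_upd[OF adm ij vw pos] by (auto simp: matchings_with_counts_def M'_def)
  finally have fiber: "{f \<in> matchings_with_counts V W s t A B e. f v = w} =
      (\<lambda>g. g(v := w)) ` matchings_with_counts (V - {v}) (W - {w}) s t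
                 (\<lambda>i. A i - {v}) (\<lambda>j. B j - {w}) (decrement e i0 j0)" .
  have "inj_on (\<lambda>g. g(v := w)) (matchings_with_counts (V - {v}) (W - {w}) s t
                    (\<lambda>i. A i - {v}) (\<lambda>j. B j - {w}) (decrement e i0 j0))"
    using perfect_matchings_fiber(2)[OF v w] by (rule inj_on_subset) (auto simp: matchings_with_counts_def)
  thus ?thesis unfolding fiber by (rule card_image)
qed

lemma matchings_with_counts_fiber_empty:
  assumes "finite (A i0)" "i0 \<le> s" "j0 \<le> t" "v \<in> A i0" "w \<in> B j0" "e i0 j0 = 0"
  shows "{f \<in> matchings_with_counts V W s t A B e. f v = w} = {}"
proof -
  have "edges_between f (A i0) (B j0) \<noteq> e i0 j0" if "f v = w" for f :: "'a \<Rightarrow> 'b"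
    using assms that by (auto simp: edges_between_def card_gt_0_iff)
  thus ?thesis using assms(2,3) by (auto simp: matchings_with_counts_def)
qed

text \<open>The weight of one fiber: if the formula holds for the reduced data, then the matchings
  sending v \<in> A i0 to w \<in> B j0 make up the fraction e i0 j0 / (a_i0 b_j0) of the formula.\<close>
lemma matchings_with_counts_fiber_weight:
  assumes adm: "admissible_counts V W s t A B e"
    and ij: "i0 \<le> s" "j0 \<le> t" and vw: "v \<in> A i0" "w \<in> B j0"
    and reduced: "e i0 j0 > 0 \<Longrightarrow>
      card (matchings_with_counts (V - {v}) (W - {w}) s t (\<lambda>i. A i - {v}) (\<lambda>j. B j - {w})
              (decrement e i0 j0)) * (\<Prod>i\<le>s. \<Prod>j\<le>t. fact (decrement e i0 j0 i j)) =
        (\<Prod>i\<le>s. fact (card (A i - {v}))) * (\<Prod>j\<le>t. fact (card (B j - {w})))"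
  shows "card {f \<in> matchings_with_counts V W s t A B e. f v = w} * (\<Prod>i\<le>s. \<Prod>j\<le>t. fact (e i j))
           * card (A i0) * card (B j0) =
         e i0 j0 * (\<Prod>i\<le>s. fact (card (A i))) * (\<Prod>j\<le>t. fact (card (B j)))"
proof (cases "e i0 j0 = 0")
  case True
  have empty: "{f \<in> matchings_with_counts V W s t A B e. f v = w} = {}"
    using matchings_with_counts_fiber_empty[of A i0 s j0 t v w B e V W,
            OF admissible_counts_parts(1)[OF adm ij(1)] ij vw True] .
  show ?thesis unfolding empty True by simp
next
  case False
  note finA = admissible_counts_parts(1)[OF adm] and finB = admissible_counts_parts(2)[OF adm]
  have "(\<Prod>i\<le>s. \<Prod>j\<le>t. fact (e i j)) =
          e i0 j0 * (\<Prod>i\<le>s. \<Prod>j\<le>t. fact (decrement e i0 j0 i j))"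
    using prod_fact_decrement[OF ij] False by simp
  moreover have "(\<Prod>i\<le>s. fact (card (A i))) = card (A i0) * (\<Prod>i\<le>s. fact (card (A i - {v})))"
    using ij vw finA admissible_counts_parts(3)[OF adm _ ij(1) vw(1)]
    by (intro prod_fact_card_remove) auto
  moreover have "(\<Prod>j\<le>t. fact (card (B j))) = card (B j0) * (\<Prod>j\<le>t. fact (card (B j - {w})))"
    using ij vw finB admissible_counts_parts(4)[OF adm _ ij(2) vw(2)]
    by (intro prod_fact_card_remove) auto
  ultimately show ?thesis
    using reduced matchings_with_counts_fiber[OF adm ij vw] False by (simp add: ac_simps)
qed

lemma matchings_with_counts_by_partner:
  assumes adm: "admissible_counts V W s t A B e" and v: "v \<in> V"
  shows "card (matchings_with_counts V W s t A B e) =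
           (\<Sum>j\<le>t. \<Sum>w\<in>B j. card {f \<in> matchings_with_counts V W s t A B e. f v = w})"
proof -
  note adm' = adm[unfolded admissible_counts_def]
  define M where "M = matchings_with_counts V W s t A B e"
  have "M \<subseteq> V \<rightarrow>\<^sub>E W" by (auto simp: M_def matchings_with_counts_def perfect_matchings_def)
  hence "finite M" using adm' by (meson finite_PiE finite_subset)
  have "f v \<in> W" if "f \<in> M" for f using that \<open>M \<subseteq> V \<rightarrow>\<^sub>E W\<close> v by (blast intro: PiE_mem)
  hence "M = (\<Union>w\<in>W. {f \<in> M. f v = w})" by auto
  hence "card M = card (\<Union>w\<in>W. {f \<in> M. f v = w})" by (rule arg_cong)
  also have "\<dots> = (\<Sum>w\<in>W. card {f \<in> M. f v = w})"
    using adm' \<open>finite M\<close> by (intro card_UN_disjoint) auto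
  also have "\<dots> = (\<Sum>j\<le>t. \<Sum>w\<in>B j. card {f \<in> M. f v = w})"
    using adm' admissible_counts_parts(2)[OF adm]
    by (auto intro!: sum.UNION_disjoint simp: disjoint_family_on_def)
  finally show ?thesis unfolding M_def .
qed

text \<open>The count for V = {}: all parts and counts vanish and the empty map is the only matching.\<close>
lemma card_matchings_with_counts_empty:
  assumes adm: "admissible_counts {} W s t A B e"
  shows "card (matchings_with_counts {} W s t A B e) * (\<Prod>i\<le>s. \<Prod>j\<le>t. fact (e i j)) =
           (\<Prod>i\<le>s. fact (card (A i))) * (\<Prod>j\<le>t. fact (card (B j)))"
proof -
  note adm' = adm[unfolded admissible_counts_def]
  have A: "A i = {}" if "i \<le> s" for i using adm' that by auto
  have e: "e i j = 0" if "i \<le> s" "j \<le> t" for i j using adm' A[of i] that by auto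
  have B: "card (B j) = 0" if "j \<le> t" for j using adm' e that by (metis atMost_iff sum.neutral)
  hence "W = {}" using adm' by (auto intro: finite_subset)
  hence "matchings_with_counts {} W s t A B e = {\<lambda>_. undefined}"
    using A e by (auto simp: matchings_with_counts_def perfect_matchings_def edges_between_def bij_betw_def)
  thus ?thesis using A e B by simp
qed

text \<open>By induction on |V|: fix v \<in> A i0; the
  fibers over the partners w \<in> B j of v have total weight \<Sum>j e i0 j / a_i0 = 1.\<close>
theorem card_matchings_with_counts:
  assumes "admissible_counts V W s t A B e"
  shows "card (matchings_with_counts V W s t A B e) * (\<Prod>i\<le>s. \<Prod>j\<le>t. fact (e i j)) =
           (\<Prod>i\<le>s. fact (card (A i))) * (\<Prod>j\<le>t. fact (card (B j)))"
  using assms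
proof (induction "card V" arbitrary: V W A B e)
  case 0
  hence "V = {}" by (simp add: admissible_counts_def)
  thus ?case using card_matchings_with_counts_empty "0.prems" by blast
next
  case (Suc k)
  note adm = Suc.prems and adm' = Suc.prems[unfolded admissible_counts_def]
  obtain v where v: "v \<in> V" using Suc.hyps(2) by (metis card.empty ex_in_conv nat.distinct(1))
  then obtain i0 where i0: "i0 \<le> s" "v \<in> A i0" using adm' by auto
  define M where "M = matchings_with_counts V W s t A B e"
  define PE where "PE = (\<Prod>i\<le>s. \<Prod>j\<le>t. fact (e i j) :: nat)"
  define PA where "PA = (\<Prod>i\<le>s. fact (card (A i)) :: nat)"
  define PB where "PB = (\<Prod>j\<le>t. fact (card (B j)) :: nat)"
  have block: "(\<Sum>w\<in>B j. card {f \<in> M. f v = w}) * PE * card (A i0) = e i0 j * PA * PB"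
    if j: "j \<le> t" for j
  proof -
    have "k = card (V - {v})" using Suc.hyps(2) adm' v by simp
    note weight = matchings_with_counts_fiber_weight[OF adm i0(1) j i0(2) _
        Suc.hyps(1)[OF this admissible_counts_remove[OF adm i0(1) j i0(2)]]]
    have "(\<Sum>w\<in>B j. card {f \<in> M. f v = w}) * PE * card (A i0) * card (B j) =
            card (B j) * (e i0 j * PA * PB)"
      using weight by (simp add: M_def PE_def PA_def PB_def sum_distrib_right)
    moreover have "card (B j) = 0 \<Longrightarrow> B j = {} \<and> e i0 j = 0"
      using admissible_counts_parts(2)[OF adm j] member_le_sum[of i0 "{..s}" "\<lambda>i. e i j"] adm' i0 j
      by simp
    ultimately show ?thesis by (cases "card (B j) = 0") simp_all
  qed
  have "card M * PE * card (A i0) = (\<Sum>j\<le>t. (\<Sum>w\<in>B j. card {f \<in> M. f v = w}) * PE * card (A i0))"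
    using matchings_with_counts_by_partner[OF adm v] by (simp add: M_def sum_distrib_right)
  also have "\<dots> = (\<Sum>j\<le>t. e i0 j) * PA * PB"
    using block by (simp add: sum_distrib_right)
  also have "\<dots> = card (A i0) * (PA * PB)" using adm' i0 by simp
  moreover have "card (A i0) > 0"
    using admissible_counts_parts(1)[OF adm i0(1)] i0 by (auto simp: card_gt_0_iff)
  ultimately show ?case unfolding M_def PE_def PA_def PB_def by simp
qed

text \<open>The case s = t = 0 of the count: there are n! perfect matchings.\<close>
lemma card_perfect_matchings:
  assumes "finite V" "finite W" "card W = card V"
  shows "card (perfect_matchings V W) = fact (card V)"
proof -
  let ?e = "\<lambda>_ _. card V"
  have adm: "admissible_counts V W 0 0 (\<lambda>_. V) (\<lambda>_. W) ?e"
    using assms by (simp add: admissible_counts_def disjoint_family_on_def)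
  have "edges_between f V W = card V" if "f \<in> perfect_matchings V W" for f
  proof -
    have "{x \<in> V. f x \<in> W} = V" using that by (auto simp: perfect_matchings_def)
    thus ?thesis by (simp add: edges_between_def)
  qed
  hence "matchings_with_counts V W 0 0 (\<lambda>_. V) (\<lambda>_. W) ?e = perfect_matchings V W"
    by (auto simp: matchings_with_counts_def)
  thus ?thesis using card_matchings_with_counts[OF adm] assms(3) by simp
qed

corollary matching_prob_eq:
  assumes "admissible_counts V W s t A B e" "card V = n" "card W = n"
  shows "matching_prob V W s t A B e =
           (\<Prod>i\<le>s. fact (card (A i))) * (\<Prod>j\<le>t. fact (card (B j))) /
           (fact n * (\<Prod>i\<le>s. \<Prod>j\<le>t. fact (e i j)))"
proof -
  have "card (perfect_matchings V W) = fact n"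
    using assms card_perfect_matchings[of V W] by (simp add: admissible_counts_def)
  moreover have "real (card (matchings_with_counts V W s t A B e)) * (\<Prod>i\<le>s. \<Prod>j\<le>t. fact (e i j)) =
                   (\<Prod>i\<le>s. fact (card (A i))) * (\<Prod>j\<le>t. fact (card (B j)))"
    using arg_cong[OF card_matchings_with_counts[OF assms(1)], of real] by simp
  moreover have "(\<Prod>i\<le>s. \<Prod>j\<le>t. fact (e i j) :: real) > 0" by (intro prod_pos) auto
  ultimately show ?thesis
    unfolding matching_prob_def matchings_with_counts_def[symmetric] by (simp add: field_simps)
qed

subsection \<open>The main term of a contingency table\<close>

lemma sqrt_prod: "sqrt (prod f A) = (\<Prod>x\<in>A. sqrt (f x))"
  by (induction A rule: infinite_finite_induct) (auto simp: real_sqrt_mult)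

lemma prod_times_exp:
  fixes g h :: "'i \<Rightarrow> real"
  shows "(\<Prod>i\<in>I. g i * exp (h i)) = prod g I * exp (sum h I)"
  by (cases "finite I") (simp_all add: prod.distrib exp_sum)

text \<open>One term of the exponent: with \<mu> = x y / z, \<mu> bracket(k/\<mu> - 1) = k log(k/\<mu>) - k + \<mu>,
  also when k = 0 (where the bracket is 1).\<close>
lemma bracket_term:
  fixes x y z :: real and k :: nat
  assumes "x > 0" "y > 0" "z > 0"
  shows "(x * y / z) * bracket (real k / (x * y / z) - 1) =
           xlnx k - real k * ln x - real k * ln y + real k * ln z - real k + x * y / z"
proof (cases "k = 0")
  case True thus ?thesis by (simp add: bracket_def xlnx_def)
next
  case False
  define \<mu> where "\<mu> = x * y / z"
  have \<mu>: "\<mu> > 0" using assms by (simp add: \<mu>_def)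
  have "\<mu> * bracket (real k / \<mu> - 1) = real k * ln (real k / \<mu>) - real k + \<mu>"
    using False \<mu> by (simp add: bracket_def field_simps)
  also have "ln (real k / \<mu>) = ln (real k) - ln x - ln y + ln z"
    using False assms by (simp add: \<mu>_def ln_div ln_mult)
  finally show ?thesis unfolding \<mu>_def xlnx_def by (simp add: algebra_simps)
qed

lemma prod_stirling:
  fixes f :: "'i \<Rightarrow> nat"
  shows "(\<Prod>i\<in>I. stirling (f i)) =
           (\<Prod>i\<in>I. sqrt (real (max (f i) 1))) * exp ((\<Sum>i\<in>I. xlnx (f i)) - (\<Sum>i\<in>I. real (f i)))"
  unfolding stirling_def by (simp add: prod_times_exp sum_subtractf)

locale contingency_table =
  fixes s t n :: nat and a b :: "nat \<Rightarrow> nat" and e :: "nat \<Rightarrow> nat \<Rightarrow> nat"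
  assumes row_sums: "\<And>i. i \<le> s \<Longrightarrow> (\<Sum>j\<le>t. e i j) = a i"
    and col_sums: "\<And>j. j \<le> t \<Longrightarrow> (\<Sum>i\<le>s. e i j) = b j"
    and total: "(\<Sum>i\<le>s. a i) = n"
    and a_pos: "\<And>i. i \<le> s \<Longrightarrow> a i > 0"
    and b_pos: "\<And>j. j \<le> t \<Longrightarrow> b j > 0"
begin

lemma n_pos: "n > 0"
  using a_pos[of 0] member_le_sum[of 0 "{..s}" a] total by simp

lemma total_entries: "(\<Sum>i\<le>s. \<Sum>j\<le>t. e i j) = n"
  using row_sums total by simp

lemma total_cols: "(\<Sum>j\<le>t. b j) = n"
proof -
  have "(\<Sum>j\<le>t. b j) = (\<Sum>j\<le>t. \<Sum>i\<le>s. e i j)" using col_sums by simp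
  also have "\<dots> = n" using total_entries by (simp add: sum.swap[of _ "{..t}"])
  finally show ?thesis .
qed

lemma weighted_row_sum: "(\<Sum>i\<le>s. \<Sum>j\<le>t. real (e i j) * g i) = (\<Sum>i\<le>s. real (a i) * g i)"
  by (intro sum.cong refl) (simp add: row_sums flip: sum_distrib_right of_nat_sum)

lemma weighted_col_sum: "(\<Sum>i\<le>s. \<Sum>j\<le>t. real (e i j) * g j) = (\<Sum>j\<le>t. real (b j) * g j)"
  by (subst sum.swap, intro sum.cong refl) (simp add: col_sums flip: sum_distrib_right of_nat_sum)

lemma entropy_sum:
  "(\<Sum>i\<le>s. \<Sum>j\<le>t. (real (a i) * real (b j) / real n) *
        bracket (real (e i j) / (real (a i) * real (b j) / real n) - 1)) =
     (\<Sum>i\<le>s. \<Sum>j\<le>t. xlnx (e i j)) - (\<Sum>i\<le>s. xlnx (a i)) - (\<Sum>j\<le>t. xlnx (b j)) + xlnx n"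
proof -
  have "(\<Sum>i\<le>s. \<Sum>j\<le>t. (real (a i) * real (b j) / real n) *
           bracket (real (e i j) / (real (a i) * real (b j) / real n) - 1)) =
        (\<Sum>i\<le>s. \<Sum>j\<le>t. xlnx (e i j) - real (e i j) * ln (real (a i))
           - real (e i j) * ln (real (b j)) + real (e i j) * ln (real n) - real (e i j)
           + real (a i) * real (b j) / real n)"
    using a_pos b_pos n_pos by (intro sum.cong refl bracket_term) auto
  also have "\<dots> = (\<Sum>i\<le>s. \<Sum>j\<le>t. xlnx (e i j)) - (\<Sum>i\<le>s. xlnx (a i)) - (\<Sum>j\<le>t. xlnx (b j))
                 + real n * ln (real n) - real n + real n * real n / real n"
  proof -
    have "(\<Sum>i\<le>s. \<Sum>j\<le>t. real (e i j) * ln (real n)) = real n * ln (real n)"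
      using weighted_row_sum[of "\<lambda>_. ln (real n)"] total by (simp flip: sum_distrib_right of_nat_sum)
    moreover have "(\<Sum>i\<le>s. \<Sum>j\<le>t. real (e i j)) = real n"
      using weighted_row_sum[of "\<lambda>_. 1"] total by (simp flip: of_nat_sum)
    moreover have "(\<Sum>i\<le>s. \<Sum>j\<le>t. real (a i) * real (b j) / real n) = real n * real n / real n"
      using total total_cols by (simp flip: sum_distrib_left sum_distrib_right sum_divide_distrib of_nat_sum)
    ultimately show ?thesis
      using weighted_row_sum[of "\<lambda>i. ln (real (a i))"] weighted_col_sum[of "\<lambda>j. ln (real (b j))"]
      by (simp add: sum_subtractf sum.distrib xlnx_def)
  qed
  also have "\<dots> = (\<Sum>i\<le>s. \<Sum>j\<le>t. xlnx (e i j)) - (\<Sum>i\<le>s. xlnx (a i)) - (\<Sum>j\<le>t. xlnx (b j)) + xlnx n"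
    using n_pos by (simp add: xlnx_def)
  finally show ?thesis .
qed

lemma chi_eq:
  "real n powr (-1/2) *
     sqrt ((\<Prod>i\<le>s. real (a i)) * (\<Prod>j\<le>t. real (b j)) /
           (\<Prod>p\<in>{p \<in> {..s} \<times> {..t}. e (fst p) (snd p) \<noteq> 0}. real (e (fst p) (snd p)))) =
   (\<Prod>i\<le>s. sqrt (real (max (a i) 1))) * (\<Prod>j\<le>t. sqrt (real (max (b j) 1))) /
     (sqrt (real (max n 1)) * (\<Prod>i\<le>s. \<Prod>j\<le>t. sqrt (real (max (e i j) 1))))"
proof -
  have nonzero_entries:
    "(\<Prod>p\<in>{p \<in> {..s} \<times> {..t}. e (fst p) (snd p) \<noteq> 0}. real (e (fst p) (snd p))) =
       (\<Prod>i\<le>s. \<Prod>j\<le>t. real (max (e i j) 1))"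
  proof -
    have "(\<Prod>p\<in>{p \<in> {..s} \<times> {..t}. e (fst p) (snd p) \<noteq> 0}. real (e (fst p) (snd p))) =
            (\<Prod>p\<in>{..s} \<times> {..t}. real (max (e (fst p) (snd p)) 1))"
      by (subst prod.inter_filter) (auto intro: prod.cong simp: max_def)
    thus ?thesis by (simp add: prod.cartesian_product case_prod_beta')
  qed
  have "(\<Prod>i\<le>s. real (a i)) = (\<Prod>i\<le>s. real (max (a i) 1))"
    by (intro prod.cong refl) (simp add: max_absorb1 Suc_leI a_pos)
  moreover have "(\<Prod>j\<le>t. real (b j)) = (\<Prod>j\<le>t. real (max (b j) 1))"
    by (intro prod.cong refl) (simp add: max_absorb1 Suc_leI b_pos)
  moreover have "real n powr (-1/2) = 1 / sqrt (real (max n 1))"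
    using n_pos by (simp add: max_def powr_minus_divide powr_half_sqrt)
  ultimately show ?thesis
    unfolding nonzero_entries by (simp add: real_sqrt_mult real_sqrt_divide sqrt_prod)
qed

lemma main_term_eq:
  "real n powr (-1/2) *
     sqrt ((\<Prod>i\<le>s. real (a i)) * (\<Prod>j\<le>t. real (b j)) /
           (\<Prod>p\<in>{p \<in> {..s} \<times> {..t}. e (fst p) (snd p) \<noteq> 0}. real (e (fst p) (snd p)))) *
   exp (- (\<Sum>i\<le>s. \<Sum>j\<le>t. (real (a i) * real (b j) / real n) *
               bracket (real (e i j) / (real (a i) * real (b j) / real n) - 1))) =
   (\<Prod>i\<le>s. stirling (a i)) * (\<Prod>j\<le>t. stirling (b j)) /
     (stirling n * (\<Prod>i\<le>s. \<Prod>j\<le>t. stirling (e i j)))"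
proof -
  define SE where "SE = (\<Prod>i\<le>s. \<Prod>j\<le>t. sqrt (real (max (e i j) 1)))"
  define XE where "XE = (\<Sum>i\<le>s. \<Sum>j\<le>t. xlnx (e i j))"
  have "(\<Prod>i\<le>s. \<Prod>j\<le>t. stirling (e i j)) =
          (\<Prod>i\<le>s. (\<Prod>j\<le>t. sqrt (real (max (e i j) 1))) *
                    exp ((\<Sum>j\<le>t. xlnx (e i j)) - (\<Sum>j\<le>t. real (e i j))))"
    by (simp add: prod_stirling)
  also have "\<dots> = SE * exp (XE - real n)"
    unfolding prod_times_exp SE_def XE_def
    using total_entries by (simp add: sum_subtractf flip: of_nat_sum)
  finally have entries: "(\<Prod>i\<le>s. \<Prod>j\<le>t. stirling (e i j)) = SE * exp (XE - real n)" .
  have rows: "(\<Prod>i\<le>s. stirling (a i)) =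
      (\<Prod>i\<le>s. sqrt (real (max (a i) 1))) * exp ((\<Sum>i\<le>s. xlnx (a i)) - real n)"
    using total by (simp add: prod_stirling flip: of_nat_sum)
  have cols: "(\<Prod>j\<le>t. stirling (b j)) =
      (\<Prod>j\<le>t. sqrt (real (max (b j) 1))) * exp ((\<Sum>j\<le>t. xlnx (b j)) - real n)"
    using total_cols by (simp add: prod_stirling flip: of_nat_sum)
  have total_term: "stirling n = sqrt (real (max n 1)) * exp (xlnx n - real n)"
    by (simp add: stirling_def)
  have "exp ((\<Sum>i\<le>s. xlnx (a i)) - real n) * exp ((\<Sum>j\<le>t. xlnx (b j)) - real n) /
          (exp (xlnx n - real n) * exp (XE - real n)) =
        exp (- (XE - (\<Sum>i\<le>s. xlnx (a i)) - (\<Sum>j\<le>t. xlnx (b j)) + xlnx n))"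
    by (simp add: exp_add[symmetric] exp_diff[symmetric] algebra_simps)
  thus ?thesis
    unfolding chi_eq entropy_sum entries rows cols total_term SE_def[symmetric] XE_def[symmetric]
    by (simp add: field_simps)
qed

end

lemma partitions_contingency_table:
  assumes "finite V" "finite W" "card V = n" "card W = n"
    and A: "is_partition V s A" and B: "is_partition W t B"
    and rows: "\<forall>i\<le>s. (\<Sum>j\<le>t. e i j) = card (A i)"
    and cols: "\<forall>j\<le>t. (\<Sum>i\<le>s. e i j) = card (B j)"
  shows "admissible_counts V W s t A B e"
    and "contingency_table s t n (\<lambda>i. card (A i)) (\<lambda>j. card (B j)) e"
proof -
  show adm: "admissible_counts V W s t A B e"
    using assms by (simp add: admissible_counts_def is_partition_def disjoint_family_on_def)
  have finA: "finite (A i)" if "i \<le> s" for i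
    using admissible_counts_parts(1)[OF adm that] .
  have finB: "finite (B j)" if "j \<le> t" for j
    using admissible_counts_parts(2)[OF adm that] .
  have "card V = card (\<Union>i\<le>s. A i)" using A by (simp add: is_partition_def)
  also have "\<dots> = (\<Sum>i\<le>s. card (A i))"
    using A finA by (intro card_UN_disjoint) (auto simp: is_partition_def)
  finally have "(\<Sum>i\<le>s. card (A i)) = card V" ..
  thus "contingency_table s t n (\<lambda>i. card (A i)) (\<lambda>j. card (B j)) e"
    using rows cols assms(3) A B finA finB
    by unfold_locales (auto simp: is_partition_def card_gt_0_iff)
qed

theorem proposition4p1:
  fixes s t :: nat
  shows "\<exists>C>0. \<forall>(n::nat) (V::nat set) (W::nat set) (A::nat \<Rightarrow> nat set) (B::nat \<Rightarrow> nat set)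
           (e::nat \<Rightarrow> nat \<Rightarrow> nat).
    finite V \<and> finite W \<and> card V = n \<and> card W = n \<and>
    is_partition V s A \<and> is_partition W t B \<and>
    (\<forall>i\<le>s. (\<Sum>j\<le>t. e i j) = card (A i)) \<and>
    (\<forall>j\<le>t. (\<Sum>i\<le>s. e i j) = card (B j)) \<longrightarrow>
    (let a = (\<lambda>i. real (card (A i)));
         b = (\<lambda>j. real (card (B j)));
         \<mu> = (\<lambda>i j. a i * b j / real n);
         \<epsilon> = (\<lambda>i j. real (e i j) / \<mu> i j - 1);
         chi = real n powr (-1/2) *
             sqrt ((\<Prod>i\<le>s. a i) * (\<Prod>j\<le>t. b j) /
                   (\<Prod>p\<in>{p \<in> {..s} \<times> {..t}. e (fst p) (snd p) \<noteq> 0}. real (e (fst p) (snd p))));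
         R = chi * exp (- (\<Sum>i\<le>s. \<Sum>j\<le>t. \<mu> i j * bracket (\<epsilon> i j)));
         P = matching_prob V W s t A B e
     in P \<le> C * R \<and> R \<le> C * P)"
proof (intro exI[of _ "exp 1 ^ ((s + 2) * (t + 2))"] conjI allI impI)
  show "(0::real) < exp 1 ^ ((s + 2) * (t + 2))" by simp
next
  fix n :: nat and V W :: "nat set" and A B :: "nat \<Rightarrow> nat set" and e :: "nat \<Rightarrow> nat \<Rightarrow> nat"
  assume "finite V \<and> finite W \<and> card V = n \<and> card W = n \<and>
    is_partition V s A \<and> is_partition W t B \<and>
    (\<forall>i\<le>s. (\<Sum>j\<le>t. e i j) = card (A i)) \<and> (\<forall>j\<le>t. (\<Sum>i\<le>s. e i j) = card (B j))"
  hence sizes: "card V = n" "card W = n"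
    and adm: "admissible_counts V W s t A B e"
    and table: "contingency_table s t n (\<lambda>i. card (A i)) (\<lambda>j. card (B j)) e"
    using partitions_contingency_table[of V W n s A t B e] by auto
  \<comment> \<open>P is the factorial ratio, R its Stirling approximation\<close>
  show "let a = (\<lambda>i. real (card (A i))); b = (\<lambda>j. real (card (B j)));
         \<mu> = (\<lambda>i j. a i * b j / real n); \<epsilon> = (\<lambda>i j. real (e i j) / \<mu> i j - 1);
         chi = real n powr (-1/2) *
             sqrt ((\<Prod>i\<le>s. a i) * (\<Prod>j\<le>t. b j) /
                   (\<Prod>p\<in>{p \<in> {..s} \<times> {..t}. e (fst p) (snd p) \<noteq> 0}. real (e (fst p) (snd p))));
         R = chi * exp (- (\<Sum>i\<le>s. \<Sum>j\<le>t. \<mu> i j * bracket (\<epsilon> i j)));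
         P = matching_prob V W s t A B e
     in P \<le> exp 1 ^ ((s + 2) * (t + 2)) * R \<and> R \<le> exp 1 ^ ((s + 2) * (t + 2)) * P"
    unfolding Let_def contingency_table.main_term_eq[OF table] matching_prob_eq[OF adm sizes]
    by (rule factorial_ratio_comparable)
qed

end
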